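(* Let $X$ be a compact metric space, $Y\subset[-1,1]$ compact, $H$ an RKHS of continuous functions on $X$ with closed unit ball $B_H$ and $\|f\|_\infty\le\|f\|_H$ for all $f\in H$, and $L:Y\times\mathbb R\to[0,\infty)$ continuous, convex in its second variable, satisfying for constants $\alpha\in[1,2]$, $c_L>0$: $\sup_{y\in Y}L(y,t)\le1+|t|^\alpha$ for all $t\in\mathbb R$ and $\sup_{y\in Y}|L(y,\cdot)|_{[-t,t]}|_1\le c_Lt^{\alpha-1}$ for all $t\ge0$. Let $P$ be a distribution on $X\times Y$ for which a minimizer $f^*_{L,P}$ of the $L$-risk exists, and suppose there are constants $v\ge0$, $c\ge1$, $\vartheta\in[0,1]$ and some $0<\lambda<1$ such that for all $f\in\lambda^{-1/2}B_H$ $$\mathbb E_P(L\circ f-L\circ f^*_{L,P})^2\le c(\|f\|_\infty+1)^v\big(\mathbb E_P(L\circ f-L\circ f^*_{L,P})\big)^\vartheta.$$ Then for all $g\in\mathcal G(\lambda)$ $$\mathbb E_Pg^2\le16c\Big(\Big(\frac{\mathbb E_Pg}{\lambda}\Big)^{1/2}+\Big(\frac{a(\lambda)}{\lambda}\Big)^{1/2}+1\Big)^v\Big((\mathbb E_Pg)^\vartheta+2a^\vartheta(\lambda)\Big).$$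
   Context: $|h|_1$ is the Lipschitz constant of $h$; $L\circ f$ denotes $(x,y)\mapsto L(y,f(x))$; $\mathcal R_{L,P}(f):=\mathbb E_PL\circ f$, $\mathcal R^*_{L,P}:=\inf\{\mathcal R_{L,P}(f):f\text{ measurable}\}$, attained by $f^*_{L,P}$. For $\lambda>0$, $f_{P,\lambda}:=\arg\min_{f\in H}(\lambda\|f\|_H^2+\mathcal R_{L,P}(f))$ and $a(\lambda):=\lambda\|f_{P,\lambda}\|_H^2+\mathcal R_{L,P}(f_{P,\lambda})-\mathcal R^*_{L,P}$; $a^\vartheta(\lambda)$ means $(a(\lambda))^\vartheta$, with $0^0:=1$. $C_\lambda(x,y,f):=\lambda\|f\|_H^2+L(y,f(x))$, $C_\lambda\circ f:=C_\lambda(\cdot,\cdot,f)$, and $\mathcal G(\lambda):=\{C_\lambda\circ f-C_\lambda\circ f_{P,\lambda}: f\in\lambda^{-1/2}B_H\}$. *)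

theory Defs
  imports "HOL-Probability.Probability"
begin

text \<open>Power with the convention 0 to the 0 equals 1 (used for a^theta and (E g)^theta).\<close>
definition pow0 :: "real \<Rightarrow> real \<Rightarrow> real" where
  "pow0 x e = (if e = 0 then 1 else x powr e)"

definition supnorm :: "('x \<Rightarrow> real) \<Rightarrow> 'x set \<Rightarrow> real" where
  "supnorm f X = (SUP x\<in>X. \<bar>f x\<bar>)"

definition risk :: "(real \<Rightarrow> real \<Rightarrow> real) \<Rightarrow> ('x \<times> real) measure \<Rightarrow> ('x \<Rightarrow> real) \<Rightarrow> ennreal" where
  "risk L P f = (\<integral>\<^sup>+ z. ennreal (L (snd z) (f (fst z))) \<partial>P)"

definition bayes_minimizer :: "(real \<Rightarrow> real \<Rightarrow> real) \<Rightarrow> ('x \<times> real) measure \<Rightarrow> ('x \<Rightarrow> real) \<Rightarrow> bool" where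
  "bayes_minimizer L P fs \<longleftrightarrow>
     (\<lambda>z. fs (fst z)) \<in> borel_measurable P \<and>
     (\<forall>f. (\<lambda>z. f (fst z)) \<in> borel_measurable P \<longrightarrow> risk L P fs \<le> risk L P f)"

text \<open>h is the regularized minimizer f_{P,lambda} over the RKHS (elements of 'h,
  evaluated via evl).\<close>
definition reg_minimizer ::
  "('h::real_normed_vector \<Rightarrow> 'x \<Rightarrow> real) \<Rightarrow> (real \<Rightarrow> real \<Rightarrow> real) \<Rightarrow> ('x \<times> real) measure \<Rightarrow> real \<Rightarrow> 'h \<Rightarrow> bool" where
  "reg_minimizer evl L P lam h \<longleftrightarrow>
     (\<forall>h'. ennreal (lam * (norm h)\<^sup>2) + risk L P (evl h) \<le> ennreal (lam * (norm h')\<^sup>2) + risk L P (evl h'))"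

end

theory Submission
  imports Defs
begin

text \<open>Write \<open>g = C\<^sub>\<lambda>\<circ>f - C\<^sub>\<lambda>\<circ>f\<^sub>P\<^sub>,\<^sub>\<lambda>\<close> as
  \<open>\<lambda>\<parallel>f\<parallel>\<^sup>2 + (L\<circ>f - L\<circ>f\<^sup>*) - \<lambda>\<parallel>f\<^sub>P\<^sub>,\<^sub>\<lambda>\<parallel>\<^sup>2 - (L\<circ>f\<^sub>P\<^sub>,\<^sub>\<lambda> - L\<circ>f\<^sup>*)\<close>; then
  \<open>E g\<^sup>2\<close> is at most four times the sum of the two squared regularization terms and the two
  second moments of the excess losses, and the latter are controlled by the variance bound, which
  also applies to \<open>f\<^sub>P\<^sub>,\<^sub>\<lambda>\<close> because \<open>\<lambda>\<parallel>f\<^sub>P\<^sub>,\<^sub>\<lambda>\<parallel>\<^sup>2 \<le> R(0) \<le> 1\<close>.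
  Since \<open>\<lambda>\<parallel>f\<parallel>\<^sup>2 + (R(f) - R\<^sup>*) = E g + a(\<lambda>)\<close>, both summands are at most \<open>E g + a(\<lambda>)\<close>,
  and the corresponding terms of \<open>f\<^sub>P\<^sub>,\<^sub>\<lambda>\<close> are at most \<open>a(\<lambda>)\<close>. Hence
  \<open>\<parallel>f\<parallel>\<^sub>\<infinity> \<le> \<parallel>f\<parallel> \<le> (E g/\<lambda>)\<^sup>1\<^sup>/\<^sup>2 + (a(\<lambda>)/\<lambda>)\<^sup>1\<^sup>/\<^sup>2\<close>, and, as \<open>s = \<lambda>\<parallel>f\<parallel>\<^sup>2 \<le> 1\<close>,
  \<open>s\<^sup>2 \<le> s\<^sup>\<vartheta> \<le> (E g + a(\<lambda>))\<^sup>\<vartheta>\<close>. Subadditivity of \<open>t \<mapsto> t\<^sup>\<vartheta>\<close> finally splits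
  \<open>(E g + a(\<lambda>))\<^sup>\<vartheta>\<close>.\<close>

lemma powr_add_le_add_powr:
  fixes x y t :: real
  assumes "0 \<le> x" "0 \<le> y" "0 < t" "t \<le> 1"
  shows "(x + y) powr t \<le> x powr t + y powr t"
proof (cases "x = 0 \<or> y = 0")
  case True
  then show ?thesis using assms by auto
next
  case False
  then have "0 < x" "0 < y" using assms by auto
  have split: "z powr t = z * z powr (t - 1)" if "0 < z" for z :: real
    using that by (simp add: powr_add[symmetric] powr_mult_base)
  have "(x + y) powr (t - 1) \<le> x powr (t - 1)" "(x + y) powr (t - 1) \<le> y powr (t - 1)"
    using \<open>0 < x\<close> \<open>0 < y\<close> assms by (auto intro: powr_mono2')
  then have "x * (x + y) powr (t - 1) + y * (x + y) powr (t - 1) \<le> x * x powr (t - 1) + y * y powr (t - 1)"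
    using \<open>0 < x\<close> \<open>0 < y\<close> by (intro add_mono mult_left_mono) auto
  then show ?thesis
    using split[of x] split[of y] split[of "x + y"] \<open>0 < x\<close> \<open>0 < y\<close> by (simp add: algebra_simps)
qed

lemma pow0_nonneg: "0 \<le> pow0 x t"
  by (simp add: pow0_def)

lemma pow0_mono: "0 \<le> x \<Longrightarrow> x \<le> y \<Longrightarrow> 0 \<le> t \<Longrightarrow> pow0 x t \<le> pow0 y t"
  by (simp add: pow0_def powr_mono2)

lemma pow0_add_le:
  "0 \<le> x \<Longrightarrow> 0 \<le> y \<Longrightarrow> 0 \<le> t \<Longrightarrow> t \<le> 1 \<Longrightarrow> pow0 (x + y) t \<le> pow0 x t + pow0 y t"
  by (auto simp: pow0_def intro: powr_add_le_add_powr)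

lemma power2_le_pow0:
  assumes "0 \<le> s" "s \<le> 1" "0 \<le> t" "t \<le> 1"
  shows "s\<^sup>2 \<le> pow0 s t"
proof -
  have "s\<^sup>2 \<le> s" using assms by (simp add: power2_eq_square mult_left_le)
  also have "s \<le> pow0 s t"
  proof (cases "t = 0 \<or> s = 0")
    case True
    then show ?thesis using assms by (auto simp: pow0_def)
  next
    case False
    then have "s powr 1 \<le> s powr t" using assms by (intro powr_mono') auto
    then show ?thesis using False assms by (simp add: pow0_def)
  qed
  finally show ?thesis .
qed

lemma square_diff_le_four_sum_squares:
  fixes w x y u :: real
  shows "(w + x - y - u)\<^sup>2 \<le> 4 * w\<^sup>2 + 4 * x\<^sup>2 + 4 * y\<^sup>2 + 4 * u\<^sup>2"
proof -
  have "4 * w\<^sup>2 + 4 * x\<^sup>2 + 4 * y\<^sup>2 + 4 * u\<^sup>2 - (w + x - y - u)\<^sup>2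
      = (w - x)\<^sup>2 + (w + y)\<^sup>2 + (w + u)\<^sup>2 + (x + y)\<^sup>2 + (x + u)\<^sup>2 + (y - u)\<^sup>2"
    by (simp add: power2_eq_square algebra_simps)
  moreover have "0 \<le> (w - x)\<^sup>2 + (w + y)\<^sup>2 + (w + u)\<^sup>2 + (x + y)\<^sup>2 + (x + u)\<^sup>2 + (y - u)\<^sup>2"
    by simp
  ultimately show ?thesis by linarith
qed

lemma le_powr_neg_half_iff:
  fixes lam r :: real
  assumes "0 < lam" "0 \<le> r"
  shows "r \<le> lam powr (-1/2) \<longleftrightarrow> lam * r\<^sup>2 \<le> 1"
proof -
  have "(lam powr (-1/2))\<^sup>2 = lam powr (-1)"
    by (simp add: power2_eq_square powr_add[symmetric])
  also have "\<dots> = 1 / lam"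
    using assms by (simp add: powr_minus divide_inverse)
  finally have sq: "(lam powr (-1/2))\<^sup>2 = 1 / lam" .
  have "r \<le> lam powr (-1/2) \<longleftrightarrow> r\<^sup>2 \<le> (lam powr (-1/2))\<^sup>2"
    using assms by (simp add: power2_le_iff_abs_le)
  also have "\<dots> \<longleftrightarrow> lam * r\<^sup>2 \<le> 1"
    unfolding sq using assms by (simp add: field_simps)
  finally show ?thesis .
qed

lemma regularization_term_le:
  fixes s Q e E S B c v \<theta> :: real
  assumes s: "0 \<le> s" "s \<le> 1" "s \<le> E" and e: "0 \<le> e" "e \<le> E"
    and S: "0 \<le> S" "S + 1 \<le> B" and c: "1 \<le> c" and v: "0 \<le> v" and \<theta>: "0 \<le> \<theta>" "\<theta> \<le> 1"
    and Q: "Q \<le> c * (S + 1) powr v * pow0 e \<theta>"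
  shows "s\<^sup>2 + Q \<le> 2 * (c * B powr v * pow0 E \<theta>)"
proof -
  have "1 \<le> B powr v" using S v by (intro ge_one_powr_ge_zero) auto
  then have cB: "1 \<le> c * B powr v" using c by (metis mult_mono' order.trans mult_1_right zero_le_one)
  have "s\<^sup>2 \<le> pow0 s \<theta>" using s \<theta> by (intro power2_le_pow0) auto
  also have "\<dots> \<le> pow0 E \<theta>" using s \<theta> by (intro pow0_mono) auto
  also have "\<dots> \<le> c * B powr v * pow0 E \<theta>"
    using cB mult_right_mono[OF cB pow0_nonneg] by simp
  finally have "s\<^sup>2 \<le> c * B powr v * pow0 E \<theta>" .
  moreover have "Q \<le> c * B powr v * pow0 E \<theta>"
  proof -
    have "(S + 1) powr v \<le> B powr v" using S v by (intro powr_mono2) auto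
    moreover have "pow0 e \<theta> \<le> pow0 E \<theta>" using e \<theta> by (intro pow0_mono) auto
    ultimately have "(S + 1) powr v * pow0 e \<theta> \<le> B powr v * pow0 E \<theta>"
      by (intro mult_mono) (auto simp: pow0_nonneg)
    then show ?thesis using Q c by (simp add: mult.assoc mult_left_mono order_trans)
  qed
  ultimately show ?thesis by linarith
qed

lemma regularized_excess_bound:
  fixes lam c v \<theta> nh np eh ep Sh Sp Qh Qp Eg a :: real
  assumes lam: "0 < lam" and c: "1 \<le> c" and v: "0 \<le> v" and \<theta>: "0 \<le> \<theta>" "\<theta> \<le> 1"
    and norms: "0 \<le> nh" "0 \<le> np" "lam * nh\<^sup>2 \<le> 1" "lam * np\<^sup>2 \<le> 1"
    and excess: "0 \<le> eh" "0 \<le> ep"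
    and sup: "0 \<le> Sh" "Sh \<le> nh" "0 \<le> Sp" "Sp \<le> np"
    and Qh: "Qh \<le> c * (Sh + 1) powr v * pow0 eh \<theta>"
    and Qp: "Qp \<le> c * (Sp + 1) powr v * pow0 ep \<theta>"
    and Eg: "Eg = lam * nh\<^sup>2 + eh - (lam * np\<^sup>2 + ep)" "0 \<le> Eg"
    and a: "a = lam * np\<^sup>2 + ep"
  shows "4 * (lam * nh\<^sup>2)\<^sup>2 + 4 * Qh + 4 * (lam * np\<^sup>2)\<^sup>2 + 4 * Qp
    \<le> 16 * c * (sqrt (Eg / lam) + sqrt (a / lam) + 1) powr v * (pow0 Eg \<theta> + 2 * pow0 a \<theta>)"
proof -
  define B where "B = sqrt (Eg / lam) + sqrt (a / lam) + 1"
  define K where "K = c * B powr v"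
  have a0: "0 \<le> a" using a lam excess by simp
  have "nh = sqrt (lam * nh\<^sup>2 / lam)" using lam norms by simp
  also have "\<dots> \<le> sqrt ((Eg + a) / lam)"
    using lam Eg a excess by (intro real_sqrt_le_mono divide_right_mono) auto
  also have "\<dots> \<le> sqrt (Eg / lam) + sqrt (a / lam)"
    using sqrt_add_le_add_sqrt[of "Eg / lam" "a / lam"] Eg a0 lam by (simp add: add_divide_distrib)
  finally have nhB: "Sh + 1 \<le> B" using sup by (simp add: B_def)
  have "np = sqrt (lam * np\<^sup>2 / lam)" using lam norms by simp
  also have "\<dots> \<le> sqrt (a / lam)"
    using lam a excess by (intro real_sqrt_le_mono divide_right_mono) auto
  moreover have "0 \<le> sqrt (Eg / lam)" using Eg lam by simp
  ultimately have npB: "Sp + 1 \<le> B" using sup unfolding B_def by linarith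
  have h: "(lam * nh\<^sup>2)\<^sup>2 + Qh \<le> 2 * (K * pow0 (Eg + a) \<theta>)"
    unfolding K_def using lam norms excess sup nhB c v \<theta> Qh Eg a
    by (intro regularization_term_le) auto
  have p: "(lam * np\<^sup>2)\<^sup>2 + Qp \<le> 2 * (K * pow0 a \<theta>)"
    unfolding K_def using lam norms excess sup npB c v \<theta> Qp a
    by (intro regularization_term_le) auto
  have K0: "0 \<le> K" using c by (simp add: K_def)
  have "K * pow0 (Eg + a) \<theta> \<le> K * (pow0 Eg \<theta> + pow0 a \<theta>)"
    using K0 Eg a0 \<theta> by (intro mult_left_mono pow0_add_le) auto
  with h p have "4 * (lam * nh\<^sup>2)\<^sup>2 + 4 * Qh + 4 * (lam * np\<^sup>2)\<^sup>2 + 4 * Qp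
      \<le> 8 * (K * (pow0 Eg \<theta> + 2 * pow0 a \<theta>))"
    by (simp add: algebra_simps)
  \<comment> \<open>The argument yields the constant 8; the stated 16 leaves slack.\<close>
  also have "\<dots> \<le> 16 * (K * (pow0 Eg \<theta> + 2 * pow0 a \<theta>))"
    using K0 by (simp add: pow0_nonneg)
  finally show ?thesis by (simp add: K_def B_def mult.assoc)
qed

lemma integrable_integral_le_of_nn_integral_le:
  fixes f :: "'a \<Rightarrow> real"
  assumes f: "f \<in> borel_measurable M" "\<And>z. z \<in> space M \<Longrightarrow> 0 \<le> f z"
    and le: "(\<integral>\<^sup>+ z. ennreal (f z) \<partial>M) \<le> ennreal B" and B: "0 \<le> B"
  shows "integrable M f" and "integral\<^sup>L M f \<le> B"
proof -
  have f0: "AE z in M. 0 \<le> f z" using f by (intro AE_I2) auto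
  show int: "integrable M f"
    using le by (intro integrableI_nonneg[OF f(1) f0]) (simp add: le_less_trans)
  have "ennreal (integral\<^sup>L M f) \<le> ennreal B"
    using le by (simp add: nn_integral_eq_integral[OF int f0])
  then show "integral\<^sup>L M f \<le> B" using B by simp
qed

lemma (in prob_space) integral_square_diff_le:
  fixes u w :: "'a \<Rightarrow> real"
  assumes "u \<in> borel_measurable M" "w \<in> borel_measurable M"
    and u2: "integrable M (\<lambda>z. (u z)\<^sup>2)" and w2: "integrable M (\<lambda>z. (w z)\<^sup>2)"
  shows "(\<integral>z. (p + u z - q - w z)\<^sup>2 \<partial>M)
    \<le> 4 * p\<^sup>2 + 4 * (\<integral>z. (u z)\<^sup>2 \<partial>M) + 4 * q\<^sup>2 + 4 * (\<integral>z. (w z)\<^sup>2 \<partial>M)"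
proof -
  define F where "F z = 4 * p\<^sup>2 + 4 * (u z)\<^sup>2 + 4 * q\<^sup>2 + 4 * (w z)\<^sup>2" for z
  have F: "integrable M F" unfolding F_def using u2 w2 by simp
  have le: "(p + u z - q - w z)\<^sup>2 \<le> F z" for z
    unfolding F_def by (rule square_diff_le_four_sum_squares)
  have "integrable M (\<lambda>z. (p + u z - q - w z)\<^sup>2)"
    using le by (intro Bochner_Integration.integrable_bound[OF F])
      (use assms in \<open>auto intro!: AE_I2 order_trans[OF _ abs_ge_self]\<close>)
  then have "(\<integral>z. (p + u z - q - w z)\<^sup>2 \<partial>M) \<le> integral\<^sup>L M F"
    using F le by (rule integral_mono)
  also have "\<dots> = 4 * p\<^sup>2 + 4 * (\<integral>z. (u z)\<^sup>2 \<partial>M) + 4 * q\<^sup>2 + 4 * (\<integral>z. (w z)\<^sup>2 \<partial>M)"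
    unfolding F_def using u2 w2 by (simp add: prob_space)
  finally show ?thesis .
qed

text \<open>\<open>loss_comp L f\<close>, \<open>real_risk L P f\<close> and \<open>reg_cost evl L lam h\<close> are the paper's
  \<open>L\<circ>f\<close>, \<open>R\<^sub>L\<^sub>,\<^sub>P(f)\<close> and \<open>C\<^sub>\<lambda>\<circ>f\<close> for \<open>f = evl h\<close>.\<close>

definition loss_comp :: "(real \<Rightarrow> real \<Rightarrow> real) \<Rightarrow> ('x \<Rightarrow> real) \<Rightarrow> 'x \<times> real \<Rightarrow> real" where
  "loss_comp L f z = L (snd z) (f (fst z))"

definition real_risk :: "(real \<Rightarrow> real \<Rightarrow> real) \<Rightarrow> ('x \<times> real) measure \<Rightarrow> ('x \<Rightarrow> real) \<Rightarrow> real" where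
  "real_risk L P f = (\<integral>z. loss_comp L f z \<partial>P)"

definition excess_loss :: "(real \<Rightarrow> real \<Rightarrow> real) \<Rightarrow> ('x \<Rightarrow> real) \<Rightarrow> ('x \<Rightarrow> real) \<Rightarrow> 'x \<times> real \<Rightarrow> real" where
  "excess_loss L fs f z = loss_comp L f z - loss_comp L fs z"

definition reg_cost ::
  "('h::real_normed_vector \<Rightarrow> 'x \<Rightarrow> real) \<Rightarrow> (real \<Rightarrow> real \<Rightarrow> real) \<Rightarrow> real \<Rightarrow> 'h \<Rightarrow> 'x \<times> real \<Rightarrow> real" where
  "reg_cost evl L lam h z = lam * (norm h)\<^sup>2 + loss_comp L (evl h) z"

lemma risk_eq_nn_integral_loss_comp: "risk L P f = (\<integral>\<^sup>+ z. ennreal (loss_comp L f z) \<partial>P)"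
  by (simp add: risk_def loss_comp_def)

locale rkhs_risk_setting =
  fixes X :: "'x::metric_space set" and Y :: "real set"
    and evl :: "'h::real_normed_vector \<Rightarrow> 'x \<Rightarrow> real"
    and L :: "real \<Rightarrow> real \<Rightarrow> real" and P :: "('x \<times> real) measure" and \<alpha> :: real
  assumes prob: "prob_space P"
    and sets_P: "sets P = sets (restrict_space borel (X \<times> Y))"
    and evl_cont: "\<And>h. continuous_on X (evl h)"
    and evl_le_norm: "\<And>h x. x \<in> X \<Longrightarrow> \<bar>evl h x\<bar> \<le> norm h"
    and L_cont: "continuous_on (Y \<times> UNIV) (\<lambda>(y, t). L y t)"
    and L_nonneg: "\<And>y t. y \<in> Y \<Longrightarrow> 0 \<le> L y t"
    and L_growth: "\<And>y t. y \<in> Y \<Longrightarrow> L y t \<le> 1 + \<bar>t\<bar> powr \<alpha>"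
    and \<alpha>_nonneg: "0 \<le> \<alpha>"
begin

sublocale prob_space P by (rule prob)

lemma space_P: "space P = X \<times> Y"
  using sets_eq_imp_space_eq[OF sets_P] by (simp add: space_restrict_space)

lemma X_nonempty: "X \<noteq> {}"
  using not_empty space_P by auto

lemma measurable_continuous_on_X_Y:
  fixes f :: "'x \<times> real \<Rightarrow> real"
  assumes "continuous_on (X \<times> Y) f"
  shows "f \<in> borel_measurable P"
  by (subst measurable_cong_sets[OF sets_P refl]) (rule borel_measurable_continuous_on_restrict[OF assms])

lemma measurable_evl_fst: "(\<lambda>z. evl h (fst z)) \<in> borel_measurable P"
  by (intro measurable_continuous_on_X_Y continuous_on_compose2[OF evl_cont continuous_on_fst]) auto

lemma measurable_loss_comp:
  assumes f: "(\<lambda>z. f (fst z)) \<in> borel_measurable P"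
  shows "loss_comp L f \<in> borel_measurable P"
proof -
  have snd: "snd \<in> borel_measurable P"
    by (intro measurable_continuous_on_X_Y continuous_intros)
  have "(\<lambda>z. (snd z, f (fst z))) \<in> borel_measurable P"
    using measurable_Pair[OF snd f] unfolding borel_prod .
  moreover have "(\<lambda>z. (snd z, f (fst z))) \<in> space P \<rightarrow> Y \<times> UNIV"
    by (auto simp: space_P Pi_iff)
  ultimately have pair: "(\<lambda>z. (snd z, f (fst z))) \<in> P \<rightarrow>\<^sub>M restrict_space borel (Y \<times> UNIV)"
    by (rule measurable_restrict_space2[rotated])
  have "(\<lambda>(y, t). L y t) \<in> borel_measurable (restrict_space borel (Y \<times> UNIV))"
    by (rule borel_measurable_continuous_on_restrict[OF L_cont])
  from measurable_compose[OF pair this] show ?thesis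
    unfolding loss_comp_def by simp
qed

lemma loss_comp_nonneg: "z \<in> space P \<Longrightarrow> 0 \<le> loss_comp L f z"
  by (auto simp: loss_comp_def space_P intro: L_nonneg)

lemma loss_comp_evl_le: "z \<in> space P \<Longrightarrow> loss_comp L (evl h) z \<le> 1 + norm h powr \<alpha>"
proof -
  assume "z \<in> space P"
  then have z: "fst z \<in> X" "snd z \<in> Y" by (auto simp: space_P)
  have "\<bar>evl h (fst z)\<bar> powr \<alpha> \<le> norm h powr \<alpha>"
    using evl_le_norm[OF z(1)] \<alpha>_nonneg by (intro powr_mono2) auto
  then show ?thesis
    using L_growth[OF z(2), of "evl h (fst z)"] by (simp add: loss_comp_def)
qed

lemma real_risk_nonneg: "0 \<le> real_risk L P f"
  unfolding real_risk_def using loss_comp_nonneg by (intro integral_nonneg_AE AE_I2) auto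

lemma integrable_loss_comp_evl: "integrable P (loss_comp L (evl h))"
  using loss_comp_nonneg loss_comp_evl_le
  by (intro integrable_const_bound[where B = "1 + norm h powr \<alpha>"] measurable_loss_comp
      measurable_evl_fst AE_I2) auto

lemma risk_eq_real_risk:
  assumes "integrable P (loss_comp L f)"
  shows "risk L P f = ennreal (real_risk L P f)"
  unfolding risk_eq_nn_integral_loss_comp real_risk_def
  using assms loss_comp_nonneg by (intro nn_integral_eq_integral AE_I2) auto

lemma enn2real_risk:
  assumes "integrable P (loss_comp L f)"
  shows "enn2real (risk L P f) = real_risk L P f"
  using risk_eq_real_risk[OF assms] real_risk_nonneg by simp

lemma real_risk_evl_zero_le: "real_risk L P (evl 0) \<le> 1"
proof -
  have "(\<integral>z. loss_comp L (evl 0) z \<partial>P) \<le> (\<integral>z. 1 \<partial>P)"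
    using loss_comp_evl_le[of _ 0] by (intro integral_mono_AE AE_I2 integrable_loss_comp_evl) auto
  then show ?thesis by (simp add: real_risk_def prob_space)
qed

lemma
  assumes "bayes_minimizer L P fs"
  shows integrable_loss_comp_bayes: "integrable P (loss_comp L fs)"
    and real_risk_bayes_le: "real_risk L P fs \<le> real_risk L P (evl h)"
proof -
  have fs: "(\<lambda>z. fs (fst z)) \<in> borel_measurable P"
    using assms by (simp add: bayes_minimizer_def)
  have min: "risk L P fs \<le> ennreal (real_risk L P (evl h))"
    using assms measurable_evl_fst
    unfolding bayes_minimizer_def risk_eq_real_risk[OF integrable_loss_comp_evl, symmetric] by blast
  have nonneg: "AE z in P. 0 \<le> loss_comp L fs z"
    using loss_comp_nonneg by (intro AE_I2) auto
  have "(\<integral>\<^sup>+ z. ennreal (loss_comp L fs z) \<partial>P) < \<infinity>"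
    using min unfolding risk_eq_nn_integral_loss_comp by (simp add: le_less_trans)
  then show int: "integrable P (loss_comp L fs)"
    by (rule integrableI_nonneg[OF measurable_loss_comp[OF fs] nonneg])
  from real_risk_nonneg[of "evl h"] show "real_risk L P fs \<le> real_risk L P (evl h)"
    using min unfolding risk_eq_real_risk[OF int] by simp
qed

lemma reg_minimizer_le:
  assumes "reg_minimizer evl L P lam fPl" "0 \<le> lam"
  shows "lam * (norm fPl)\<^sup>2 + real_risk L P (evl fPl) \<le> lam * (norm h)\<^sup>2 + real_risk L P (evl h)"
proof -
  have "ennreal (lam * (norm fPl)\<^sup>2) + ennreal (real_risk L P (evl fPl))
      \<le> ennreal (lam * (norm h)\<^sup>2) + ennreal (real_risk L P (evl h))"
    using assms(1) unfolding reg_minimizer_def risk_eq_real_risk[OF integrable_loss_comp_evl] by blast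
  then show ?thesis
    using assms(2) real_risk_nonneg by (simp add: ennreal_plus[symmetric] del: ennreal_plus)
qed

lemma reg_minimizer_norm_le:
  assumes "reg_minimizer evl L P lam fPl" "0 \<le> lam"
  shows "lam * (norm fPl)\<^sup>2 \<le> 1"
  using reg_minimizer_le[OF assms, of 0] real_risk_evl_zero_le real_risk_nonneg[of "evl fPl"] by simp

lemma supnorm_evl_nonneg: "0 \<le> supnorm (evl h) X"
proof -
  obtain x where "x \<in> X" using X_nonempty by auto
  moreover have "bdd_above ((\<lambda>x. \<bar>evl h x\<bar>) ` X)"
    using evl_le_norm by (intro bdd_aboveI2) auto
  ultimately show ?thesis
    unfolding supnorm_def by (meson abs_ge_zero cSUP_upper order_trans)
qed

lemma supnorm_evl_le_norm: "supnorm (evl h) X \<le> norm h"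
  unfolding supnorm_def using X_nonempty evl_le_norm by (intro cSUP_least) auto

lemma integral_reg_cost_diff:
  "(\<integral>z. reg_cost evl L lam h z - reg_cost evl L lam h' z \<partial>P)
    = lam * (norm h)\<^sup>2 + real_risk L P (evl h) - (lam * (norm h')\<^sup>2 + real_risk L P (evl h'))"
  by (simp add: reg_cost_def real_risk_def integrable_loss_comp_evl prob_space)

context
  fixes fs :: "'x \<Rightarrow> real"
  assumes fs: "bayes_minimizer L P fs"
begin

lemma measurable_excess_loss: "excess_loss L fs (evl h) \<in> borel_measurable P"
  using fs measurable_loss_comp measurable_evl_fst
  unfolding excess_loss_def bayes_minimizer_def by (intro borel_measurable_diff) auto

lemma integral_excess_loss: "(\<integral>z. excess_loss L fs (evl h) z \<partial>P) = real_risk L P (evl h) - real_risk L P fs"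
  unfolding excess_loss_def real_risk_def
  by (intro Bochner_Integration.integral_diff integrable_loss_comp_evl integrable_loss_comp_bayes[OF fs])

lemma second_moment_excess_loss_le:
  assumes K: "0 \<le> K"
    and le: "(\<integral>\<^sup>+ z. ennreal ((excess_loss L fs (evl h) z)\<^sup>2) \<partial>P)
      \<le> ennreal (K * pow0 (\<integral>z. excess_loss L fs (evl h) z \<partial>P) \<theta>)"
  shows "integrable P (\<lambda>z. (excess_loss L fs (evl h) z)\<^sup>2)
    \<and> (\<integral>z. (excess_loss L fs (evl h) z)\<^sup>2 \<partial>P) \<le> K * pow0 (real_risk L P (evl h) - real_risk L P fs) \<theta>"
proof -
  have "(\<lambda>z. (excess_loss L fs (evl h) z)\<^sup>2) \<in> borel_measurable P"
    by (intro borel_measurable_power measurable_excess_loss)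
  moreover have "\<And>z. z \<in> space P \<Longrightarrow> 0 \<le> (excess_loss L fs (evl h) z)\<^sup>2"
    by simp
  moreover have "0 \<le> K * pow0 (real_risk L P (evl h) - real_risk L P fs) \<theta>"
    using K by (simp add: pow0_nonneg)
  ultimately show ?thesis
    using integrable_integral_le_of_nn_integral_le le unfolding integral_excess_loss by blast
qed

lemma second_moment_reg_cost_diff_le:
  assumes "integrable P (\<lambda>z. (excess_loss L fs (evl h) z)\<^sup>2)"
    and "integrable P (\<lambda>z. (excess_loss L fs (evl h') z)\<^sup>2)"
  shows "(\<integral>z. (reg_cost evl L lam h z - reg_cost evl L lam h' z)\<^sup>2 \<partial>P)
    \<le> 4 * (lam * (norm h)\<^sup>2)\<^sup>2 + 4 * (\<integral>z. (excess_loss L fs (evl h) z)\<^sup>2 \<partial>P)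
      + 4 * (lam * (norm h')\<^sup>2)\<^sup>2 + 4 * (\<integral>z. (excess_loss L fs (evl h') z)\<^sup>2 \<partial>P)"
proof -
  have "reg_cost evl L lam h z - reg_cost evl L lam h' z
      = lam * (norm h)\<^sup>2 + excess_loss L fs (evl h) z - lam * (norm h')\<^sup>2 - excess_loss L fs (evl h') z" for z
    by (simp add: reg_cost_def excess_loss_def)
  then show ?thesis
    using assms by (simp add: integral_square_diff_le measurable_excess_loss)
qed

lemma reg_cost_second_moment_le:
  assumes fPl: "reg_minimizer evl L P lam fPl"
    and params: "0 < lam" "1 \<le> c" "0 \<le> v" "0 \<le> \<theta>" "\<theta> \<le> 1"
    and variance: "\<And>f. norm f \<le> lam powr (-1/2) \<Longrightarrow>
        integrable P (\<lambda>z. (excess_loss L fs (evl f) z)\<^sup>2) \<and>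
        (\<integral>z. (excess_loss L fs (evl f) z)\<^sup>2 \<partial>P)
          \<le> c * (supnorm (evl f) X + 1) powr v * pow0 (real_risk L P (evl f) - real_risk L P fs) \<theta>"
    and h: "norm h \<le> lam powr (-1/2)"
    and Eg: "Eg = lam * (norm h)\<^sup>2 + real_risk L P (evl h) - (lam * (norm fPl)\<^sup>2 + real_risk L P (evl fPl))"
    and a: "a = lam * (norm fPl)\<^sup>2 + real_risk L P (evl fPl) - real_risk L P fs"
  shows "(\<integral>z. (reg_cost evl L lam h z - reg_cost evl L lam fPl z)\<^sup>2 \<partial>P)
    \<le> 16 * c * (sqrt (Eg / lam) + sqrt (a / lam) + 1) powr v * (pow0 Eg \<theta> + 2 * pow0 a \<theta>)"
proof -
  have h_le: "lam * (norm h)\<^sup>2 \<le> 1"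
    using h unfolding le_powr_neg_half_iff[OF params(1) norm_ge_zero] .
  have fPl_le: "lam * (norm fPl)\<^sup>2 \<le> 1"
    using reg_minimizer_norm_le[OF fPl] params by simp
  then have "norm fPl \<le> lam powr (-1/2)"
    unfolding le_powr_neg_half_iff[OF params(1) norm_ge_zero] .
  note var_h = variance[OF h] and var_fPl = variance[OF this]
  have "(\<integral>z. (reg_cost evl L lam h z - reg_cost evl L lam fPl z)\<^sup>2 \<partial>P)
    \<le> 4 * (lam * (norm h)\<^sup>2)\<^sup>2 + 4 * (\<integral>z. (excess_loss L fs (evl h) z)\<^sup>2 \<partial>P)
      + 4 * (lam * (norm fPl)\<^sup>2)\<^sup>2 + 4 * (\<integral>z. (excess_loss L fs (evl fPl) z)\<^sup>2 \<partial>P)"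
    using var_h var_fPl by (intro second_moment_reg_cost_diff_le) auto
  also have "\<dots> \<le> 16 * c * (sqrt (Eg / lam) + sqrt (a / lam) + 1) powr v * (pow0 Eg \<theta> + 2 * pow0 a \<theta>)"
  proof (rule regularized_excess_bound[OF params norm_ge_zero norm_ge_zero h_le fPl_le,
        where eh = "real_risk L P (evl h) - real_risk L P fs"
          and ep = "real_risk L P (evl fPl) - real_risk L P fs"
          and Sh = "supnorm (evl h) X" and Sp = "supnorm (evl fPl) X"])
    show "0 \<le> real_risk L P (evl h) - real_risk L P fs" "0 \<le> real_risk L P (evl fPl) - real_risk L P fs"
      using real_risk_bayes_le[OF fs] by simp_all
    show "0 \<le> Eg" using reg_minimizer_le[OF fPl] params by (simp add: Eg)
  qed (use var_h var_fPl in \<open>simp_all add: Eg a supnorm_evl_nonneg supnorm_evl_le_norm\<close>)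
  finally show ?thesis .
qed

end

end

theorem lemma4p2:
  fixes X :: "'x::metric_space set" and Y :: "real set"
    and evl :: "'h::{real_inner, complete_space} \<Rightarrow> 'x \<Rightarrow> real"
    and L :: "real \<Rightarrow> real \<Rightarrow> real"
    and P :: "('x \<times> real) measure"
    and fstar :: "'x \<Rightarrow> real" and fPl :: 'h
    and \<alpha> cL v c \<theta> lam :: real
  assumes X: "compact X"
    and Y: "compact Y" "Y \<subseteq> {-1..1}"
    and H_lin: "\<And>x. linear (\<lambda>h. evl h x)"
    and H_fun: "\<And>h. (\<forall>x\<in>X. evl h x = 0) \<Longrightarrow> h = 0"
    and H_cont: "\<And>h. continuous_on X (evl h)"
    and H_sup: "\<And>h x. x \<in> X \<Longrightarrow> \<bar>evl h x\<bar> \<le> norm h"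
    and L_cont: "continuous_on (Y \<times> UNIV) (\<lambda>(y, t). L y t)"
    and L_nonneg: "\<And>y t. y \<in> Y \<Longrightarrow> 0 \<le> L y t"
    and L_convex: "\<And>y. y \<in> Y \<Longrightarrow> convex_on UNIV (L y)"
    and \<alpha>: "1 \<le> \<alpha>" "\<alpha> \<le> 2" and cL: "cL > 0"
    and L_growth: "\<And>y t. y \<in> Y \<Longrightarrow> L y t \<le> 1 + \<bar>t\<bar> powr \<alpha>"
    and L_lip: "\<And>y t. y \<in> Y \<Longrightarrow> t \<ge> 0 \<Longrightarrow> (cL * t powr (\<alpha> - 1))-lipschitz_on {-t..t} (L y)"
    and P: "prob_space P" "sets P = sets (restrict_space borel (X \<times> Y))"
    and fstar: "bayes_minimizer L P fstar"
    and params: "v \<ge> 0" "c \<ge> 1" "0 \<le> \<theta>" "\<theta> \<le> 1" "0 < lam" "lam < 1"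
    and variance: "\<And>h. norm h \<le> lam powr (-1/2) \<Longrightarrow>
        (\<integral>\<^sup>+ z. ennreal ((L (snd z) (evl h (fst z)) - L (snd z) (fstar (fst z)))\<^sup>2) \<partial>P)
        \<le> ennreal (c * (supnorm (evl h) X + 1) powr v *
             pow0 (\<integral> z. (L (snd z) (evl h (fst z)) - L (snd z) (fstar (fst z))) \<partial>P) \<theta>)"
    and fPl: "reg_minimizer evl L P lam fPl"
  shows "\<forall>h. norm h \<le> lam powr (-1/2) \<longrightarrow>
    (let g = (\<lambda>z. (lam * (norm h)\<^sup>2 + L (snd z) (evl h (fst z)))
                 - (lam * (norm fPl)\<^sup>2 + L (snd z) (evl fPl (fst z))));
         a = lam * (norm fPl)\<^sup>2 + enn2real (risk L P (evl fPl)) - enn2real (risk L P fstar);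
         Eg = (\<integral> z. g z \<partial>P)
     in (\<integral> z. (g z)\<^sup>2 \<partial>P)
        \<le> 16 * c * (sqrt (Eg / lam) + sqrt (a / lam) + 1) powr v * (pow0 Eg \<theta> + 2 * pow0 a \<theta>))"
proof (intro allI impI)
  fix h :: 'h
  assume h: "norm h \<le> lam powr (-1/2)"
  interpret rkhs_risk_setting X Y evl L P \<alpha>
    using \<alpha>(1) by (intro rkhs_risk_setting.intro) (simp_all add: P H_cont H_sup L_cont L_nonneg L_growth)
  have var: "integrable P (\<lambda>z. (excess_loss L fstar (evl f) z)\<^sup>2) \<and>
      (\<integral>z. (excess_loss L fstar (evl f) z)\<^sup>2 \<partial>P)
        \<le> c * (supnorm (evl f) X + 1) powr v * pow0 (real_risk L P (evl f) - real_risk L P fstar) \<theta>"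
    if "norm f \<le> lam powr (-1/2)" for f
  proof -
    have "0 \<le> c * (supnorm (evl f) X + 1) powr v" using params by simp
    from second_moment_excess_loss_le[OF fstar this, unfolded excess_loss_def loss_comp_def,
        OF variance[OF that]]
    show ?thesis unfolding excess_loss_def loss_comp_def .
  qed
  show "let g = (\<lambda>z. (lam * (norm h)\<^sup>2 + L (snd z) (evl h (fst z)))
                 - (lam * (norm fPl)\<^sup>2 + L (snd z) (evl fPl (fst z))));
         a = lam * (norm fPl)\<^sup>2 + enn2real (risk L P (evl fPl)) - enn2real (risk L P fstar);
         Eg = (\<integral> z. g z \<partial>P)
     in (\<integral> z. (g z)\<^sup>2 \<partial>P)
        \<le> 16 * c * (sqrt (Eg / lam) + sqrt (a / lam) + 1) powr v * (pow0 Eg \<theta> + 2 * pow0 a \<theta>)"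
    using reg_cost_second_moment_le[OF fstar fPl params(5,2,1,3,4) var h integral_reg_cost_diff refl]
    unfolding Let_def reg_cost_def loss_comp_def enn2real_risk[OF integrable_loss_comp_evl]
      enn2real_risk[OF integrable_loss_comp_bayes[OF fstar]] .
qed

end
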